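(* Let $r_i,n_i,k_{ij}$ ($i,j\in[d]$) be integers with $r_i\ge0$, $r_1+\dots+r_d\ge1$, $k_{ij}\ge0$ for $i\ne j$, $-k_{jj}=r_j+\sum_{i\ne j}k_{ij}$ for all $j$, $n_i\ge-k_{ii}$ and $-k_{ii}>0$ for all $i$; put $k'_{ii}=n_i+k_{ii}$ and $k'_{ij}=k_{ij}$ for $i\ne j$. Let $\mathrm U=\prod_{i=1}^d\{0,1,\dots,n_i\}$ and let $\mathrm N=(N_{i,\mathrm u})_{i\in[d],\mathrm u\in\mathrm U}$ be nonnegative integers with $n_i=\sum_{\mathrm u\in\mathrm U}N_{i,\mathrm u}$ and $k'_{ij}=\sum_{\mathrm u\in\mathrm U}u_jN_{i,\mathrm u}$ for $i,j\in[d]$. Let $\mathcal F_d^{k_{ij},\mathrm n}(\mathrm N)$ be the set of $d$-type plane forests with $n_i$ vertices of type $i$, $r_i$ roots of type $i$, exactly $k_{ij}$ vertices of type $j$ with a parent of type $i$ for $i\ne j$, and exactly $N_{i,\mathrm u}$ vertices of type $i$ with indegree type $\mathrm u$ for every $i\in[d]$, $\mathrm u\in\mathrm U$. Then $$\left|\mathcal F_d^{k_{ij},\mathrm n}(\mathrm N)\right|=\frac{\prod_{j=1}^d(n_j-1)!\,\det(-k_{ij})}{\prod_{i\in[d],\mathrm u\in\mathrm U}N_{i,\mathrm u}!}.$$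
   Context: $d\ge2$, $[d]=\{1,\dots,d\}$. A $d$-type plane forest is a finite sequence of finite rooted plane (ordered) trees whose vertices each carry a type in $[d]$, such that children of a common parent appear from left to right in nondecreasing order of type; forests are unlabeled (counted up to isomorphism preserving tree order, planar order and types). A vertex has indegree type $\mathrm u=(u_1,\dots,u_d)$ if it has exactly $u_j$ children of type $j$ for each $j\in[d]$.
   Formalization: In a d-type plane forest the roots, like the children of a common parent, also appear from left to right in nondecreasing order of type, not in arbitrary order. The statement above fails without it. *)

theory Defs
  imports Main "Jordan_Normal_Form.Determinant"
begin

text \<open>Plane trees have no
  nontrivial automorphisms, so unlabeled plane trees are exactly values of this
  datatype.\<close>

datatype ptree = Node nat "ptree list"

fun root_type :: "ptree \<Rightarrow> nat" where
  "root_type (Node t cs) = t"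

fun children :: "ptree \<Rightarrow> ptree list" where
  "children (Node t cs) = cs"

fun wf_tree :: "nat \<Rightarrow> ptree \<Rightarrow> bool" where
  "wf_tree d (Node t cs) =
     (t \<in> {1..d} \<and> sorted (map root_type cs) \<and> (\<forall>c\<in>set cs. wf_tree d c))"

text \<open>All vertices of a tree (each vertex represented by the subtree rooted at it).\<close>
fun subtrees :: "ptree \<Rightarrow> ptree list" where
  "subtrees (Node t cs) = Node t cs # concat (map subtrees cs)"

type_synonym pforest = "ptree list"

text \<open>A d-type plane forest; the roots are (like children of a common virtual
  parent) listed in nondecreasing order of type.\<close>
definition wf_forest :: "nat \<Rightarrow> pforest \<Rightarrow> bool" where
  "wf_forest d F = ((\<forall>T\<in>set F. wf_tree d T) \<and> sorted (map root_type F))"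

definition vertices :: "pforest \<Rightarrow> ptree list" where
  "vertices F = concat (map subtrees F)"

definition num_vertices_of_type :: "pforest \<Rightarrow> nat \<Rightarrow> nat" where
  "num_vertices_of_type F i = length (filter (\<lambda>v. root_type v = i) (vertices F))"

definition num_roots_of_type :: "pforest \<Rightarrow> nat \<Rightarrow> nat" where
  "num_roots_of_type F i = length (filter (\<lambda>T. root_type T = i) F)"

definition num_edges :: "pforest \<Rightarrow> nat \<Rightarrow> nat \<Rightarrow> nat" where
  "num_edges F i j =
     sum_list (map (\<lambda>v. length (filter (\<lambda>c. root_type c = j) (children v)))
                   (filter (\<lambda>v. root_type v = i) (vertices F)))"

text \<open>Indegree type of a vertex: u j = number of children of type j (0 for j outside [d]
  in a well-formed tree).\<close>
definition indeg_type :: "ptree \<Rightarrow> (nat \<Rightarrow> nat)" where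
  "indeg_type v = (\<lambda>j. length (filter (\<lambda>c. root_type c = j) (children v)))"

definition num_vertices_indeg :: "pforest \<Rightarrow> nat \<Rightarrow> (nat \<Rightarrow> nat) \<Rightarrow> nat" where
  "num_vertices_indeg F i u =
     length (filter (\<lambda>v. root_type v = i \<and> indeg_type v = u) (vertices F))"

text \<open>U = prod_{i=1}^d {0..n_i}, as functions vanishing outside [d].\<close>
definition indeg_box :: "nat \<Rightarrow> (nat \<Rightarrow> nat) \<Rightarrow> (nat \<Rightarrow> nat) set" where
  "indeg_box d n = {u. (\<forall>j. j \<notin> {1..d} \<longrightarrow> u j = 0) \<and> (\<forall>j\<in>{1..d}. u j \<le> n j)}"

definition forest_class ::
  "nat \<Rightarrow> (nat \<Rightarrow> nat) \<Rightarrow> (nat \<Rightarrow> nat) \<Rightarrow> (nat \<Rightarrow> nat \<Rightarrow> int) \<Rightarrow> (nat \<Rightarrow> (nat \<Rightarrow> nat) \<Rightarrow> nat)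
     \<Rightarrow> pforest set" where
  "forest_class d n r k N = {F. wf_forest d F \<and>
     (\<forall>i\<in>{1..d}. num_vertices_of_type F i = n i) \<and>
     (\<forall>i\<in>{1..d}. num_roots_of_type F i = r i) \<and>
     (\<forall>i\<in>{1..d}. \<forall>j\<in>{1..d}. i \<noteq> j \<longrightarrow> int (num_edges F i j) = k i j) \<and>
     (\<forall>i\<in>{1..d}. \<forall>u\<in>indeg_box d n. num_vertices_indeg F i u = N i u)}"

definition kprime :: "(nat \<Rightarrow> nat) \<Rightarrow> (nat \<Rightarrow> nat \<Rightarrow> int) \<Rightarrow> nat \<Rightarrow> nat \<Rightarrow> int" where
  "kprime n k i j = (if i = j then int (n i) + k i i else k i j)"

end

theory Submission
  imports Defs
begin

text \<open>A forest is described, as far as the counts in the theorem are concerned, by its root counts r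
  and the multiset D of (type, indegree type) pairs of its vertices.  Deleting the first root of a
  type t with r t \<ge> 1 and promoting its children to roots is a bijection from the forests with data
  (r, D) onto the disjoint union, over the indegree types u with (t, u) \<in> D, of the forests with data
  (r + u - e_t, D - (t, u)).  Multiplied by the product of the factorials of the multiplicities in D,
  the number of forests therefore satisfies a recurrence weighted by the multiplicities of the (t, u).
  The right-hand side (n_1 - 1)! \<dots> (n_d - 1)! det (diag n - E) satisfies the same recurrence by
  linearity of the determinant in row t, and both sides agree when D is empty and when no roots are
  left (then the rows of the occurring types sum to zero).\<close>

section \<open>Determinants\<close>

definition replace_row :: "'a mat \<Rightarrow> nat \<Rightarrow> (nat \<Rightarrow> 'a) \<Rightarrow> 'a mat" where
  "replace_row A t v = mat (dim_row A) (dim_col A) (\<lambda>(i, j). if i = t then v j else A $$ (i, j))"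

lemma replace_row_carrier: "A \<in> carrier_mat n n \<Longrightarrow> replace_row A t v \<in> carrier_mat n n"
  by (simp add: replace_row_def)

lemma cofactor_eq_if_rows_agree:
  assumes "A \<in> carrier_mat n n" and "B \<in> carrier_mat n n"
    and "\<And>i j. i < n \<Longrightarrow> j < n \<Longrightarrow> i \<noteq> t \<Longrightarrow> A $$ (i, j) = B $$ (i, j)"
  shows "cofactor A t j = cofactor B t j"
proof -
  have "mat_delete A t j = mat_delete B t j"
    by (rule eq_matI) (use assms in \<open>auto simp: mat_delete_def\<close>)
  then show ?thesis by (simp add: cofactor_def)
qed

lemma det_replace_row:
  assumes A: "(A :: 'a :: comm_ring_1 mat) \<in> carrier_mat n n" and t: "t < n"
  shows "det (replace_row A t v) = (\<Sum>j<n. v j * cofactor A t j)"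
proof -
  have R: "replace_row A t v \<in> carrier_mat n n" using A by (rule replace_row_carrier)
  have cof: "cofactor (replace_row A t v) t j = cofactor A t j" for j
    by (rule cofactor_eq_if_rows_agree[OF R A]) (use A in \<open>simp add: replace_row_def\<close>)
  have entry: "replace_row A t v $$ (t, j) = v j" if "j < n" for j
    using A t that by (simp add: replace_row_def)
  have "det (replace_row A t v) = (\<Sum>j<n. replace_row A t v $$ (t, j) * cofactor (replace_row A t v) t j)"
    by (rule laplace_expansion_row[OF R t])
  also have "\<dots> = (\<Sum>j<n. v j * cofactor A t j)"
    by (rule sum.cong) (simp_all add: entry cof)
  finally show ?thesis .
qed

lemma det_replace_row_linear:
  assumes A: "(A :: 'a :: comm_ring_1 mat) \<in> carrier_mat n n" and t: "t < n"
    and w: "\<And>j. j < n \<Longrightarrow> (\<Sum>u\<in>U. c u * v u j) = w j"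
  shows "(\<Sum>u\<in>U. c u * det (replace_row A t (v u))) = det (replace_row A t w)"
proof -
  have "(\<Sum>u\<in>U. c u * det (replace_row A t (v u))) = (\<Sum>u\<in>U. \<Sum>j<n. c u * v u j * cofactor A t j)"
    by (simp add: det_replace_row[OF A t] sum_distrib_left mult.assoc)
  also have "\<dots> = (\<Sum>j<n. \<Sum>u\<in>U. c u * v u j * cofactor A t j)"
    by (rule sum.swap)
  also have "\<dots> = (\<Sum>j<n. w j * cofactor A t j)"
    by (rule sum.cong[OF refl]) (simp add: w[symmetric] sum_distrib_right)
  also have "\<dots> = det (replace_row A t w)"
    by (simp add: det_replace_row[OF A t])
  finally show ?thesis .
qed

lemma det_replace_row_scaled:
  assumes A: "(A :: 'a :: comm_ring_1 mat) \<in> carrier_mat n n" and t: "t < n"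
  shows "det (replace_row A t (\<lambda>j. a * A $$ (t, j))) = a * det A"
  by (simp add: det_replace_row[OF A t] laplace_expansion_row[OF A t] sum_distrib_left mult.assoc)

lemma det_unit_column:
  assumes A: "(A :: 'a :: comm_ring_1 mat) \<in> carrier_mat n n" and t: "t < n"
    and col: "\<And>i. i < n \<Longrightarrow> A $$ (i, t) = (if i = t then 1 else 0)"
  shows "det A = cofactor A t t"
proof -
  have "det A = (\<Sum>i<n. A $$ (i, t) * cofactor A i t)" by (rule laplace_expansion_column[OF A t])
  also have "\<dots> = (\<Sum>i<n. if i = t then cofactor A t t else 0)" by (rule sum.cong) (auto simp: col)
  finally show ?thesis using t by simp
qed

lemma det_zero_if_rows_sum_zero:
  assumes A: "(A :: 'a :: idom mat) \<in> carrier_mat n n" and S: "S \<subseteq> {..<n}" "S \<noteq> {}"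
    and sums: "\<And>j. j < n \<Longrightarrow> (\<Sum>i\<in>S. A $$ (i, j)) = 0"
  shows "det A = 0"
proof -
  define v :: "'a vec" where "v = vec n (\<lambda>i. if i \<in> S then 1 else 0)"
  obtain t where t: "t \<in> S" using S(2) by blast
  have "v $ t = 1" using t S(1) by (auto simp: v_def)
  then have nonzero: "v \<noteq> 0\<^sub>v n" using t S(1) by auto
  have kernel: "A\<^sup>T *\<^sub>v v = 0\<^sub>v n"
  proof (rule eq_vecI)
    fix j assume "j < dim_vec (0\<^sub>v n :: 'a vec)"
    then have j: "j < n" by simp
    have "(A\<^sup>T *\<^sub>v v) $ j = (\<Sum>i\<in>{..<n} \<inter> S. A $$ (i, j))"
      using A j by (simp add: scalar_prod_def v_def sum.inter_restrict lessThan_atLeast0 if_distrib cong: if_cong)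
    also have "\<dots> = 0" using S(1) sums[OF j] by (simp add: Int_absorb1)
    finally show "(A\<^sup>T *\<^sub>v v) $ j = 0\<^sub>v n $ j" using j by simp
  qed (use A in simp)
  have "v \<in> carrier_vec n" by (simp add: v_def)
  then have "\<exists>v. v \<in> carrier_vec n \<and> v \<noteq> 0\<^sub>v n \<and> A\<^sup>T *\<^sub>v v = 0\<^sub>v n"
    using nonzero kernel by blast
  then have "det A\<^sup>T = 0"
    using det_0_iff_vec_prod_zero[of "A\<^sup>T" n] A by simp
  then show ?thesis using det_transpose[OF A] by simp
qed

section \<open>The Laplacian-type matrix of a signature\<close>

text \<open>Row and column i of the matrix belong to type i + 1, and E i j counts the children of
  type j of the vertices of type i.  A type that does not occur (n i = 0) gets a unit row and
  column, so it contributes the factor 1 to the determinant.\<close>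

definition laplacian_mat :: "nat \<Rightarrow> (nat \<Rightarrow> nat) \<Rightarrow> (nat \<Rightarrow> nat \<Rightarrow> nat) \<Rightarrow> int mat" where
  "laplacian_mat d n E = mat d d (\<lambda>(i, j). (if i = j then int (n (Suc i)) else 0)
     - int (E (Suc i) (Suc j)) + (if i = j \<and> n (Suc i) = 0 then 1 else 0))"

lemma laplacian_mat_carrier: "laplacian_mat d n E \<in> carrier_mat d d"
  by (simp add: laplacian_mat_def)

lemma laplacian_mat_dims [simp]:
  "dim_row (laplacian_mat d n E) = d" "dim_col (laplacian_mat d n E) = d"
  by (simp_all add: laplacian_mat_def)

lemma laplacian_mat_index [simp]:
  "i < d \<Longrightarrow> j < d \<Longrightarrow> laplacian_mat d n E $$ (i, j) = (if i = j then int (n (Suc i)) else 0)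
     - int (E (Suc i) (Suc j)) + (if i = j \<and> n (Suc i) = 0 then 1 else 0)"
  by (simp add: laplacian_mat_def)

lemma det_laplacian_mat_eq_0:
  assumes balanced: "\<And>j. j \<in> {1..d} \<Longrightarrow> n j = (\<Sum>i=1..d. E i j)"
    and absent: "\<And>i j. n i = 0 \<Longrightarrow> E i j = 0"
    and t: "t \<in> {1..d}" and "n t > 0"
  shows "det (laplacian_mat d n E) = 0"
proof (rule det_zero_if_rows_sum_zero[OF laplacian_mat_carrier])
  show "{i. i < d \<and> n (Suc i) > 0} \<subseteq> {..<d}" by auto
  show "{i. i < d \<and> n (Suc i) > 0} \<noteq> {}" using t \<open>n t > 0\<close> by (auto intro!: exI[of _ "t - 1"])
next
  fix j assume j: "j < d"
  have "(\<Sum>i\<in>{i. i < d \<and> n (Suc i) > 0}. laplacian_mat d n E $$ (i, j))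
      = (\<Sum>i<d. if n (Suc i) > 0 then laplacian_mat d n E $$ (i, j) else 0)"
    by (simp add: sum.inter_filter[symmetric] Collect_conj_eq lessThan_def Int_commute)
  also have "\<dots> = (\<Sum>i<d. (if i = j then int (n (Suc j)) else 0) - int (E (Suc i) (Suc j)))"
    by (rule sum.cong) (use j absent in auto)
  also have "\<dots> = int (n (Suc j)) - int (\<Sum>i<d. E (Suc i) (Suc j))"
    using j by (simp add: sum.distrib sum_subtractf)
  also have "(\<Sum>i<d. E (Suc i) (Suc j)) = n (Suc j)"
    using balanced[of "Suc j"] j by (simp add: sum.atLeast1_atMost_eq)
  finally show "(\<Sum>i\<in>{i. i < d \<and> n (Suc i) > 0}. laplacian_mat d n E $$ (i, j)) = 0" by simp
qed

lemma laplacian_mat_pop_eq_replace_row: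
  assumes t: "t \<in> {1..d}" and "n t \<ge> 2" and le: "\<And>j. u j \<le> E t j"
  shows "laplacian_mat d (n(t := n t - 1)) (E(t := \<lambda>j. E t j - u j))
    = replace_row (laplacian_mat d n E) (t - 1)
        (\<lambda>j. laplacian_mat d n E $$ (t - 1, j) + int (u (Suc j)) - (if j = t - 1 then 1 else 0))"
    (is "_ = replace_row ?A (t - 1) ?v")
proof (rule eq_matI)
  have St0: "Suc (t - 1) = t" using t by auto
  fix i j assume "i < dim_row (replace_row ?A (t - 1) ?v)" "j < dim_col (replace_row ?A (t - 1) ?v)"
  then have i: "i < d" and j: "j < d" by (auto simp: replace_row_def)
  show "laplacian_mat d (n(t := n t - 1)) (E(t := \<lambda>j. E t j - u j)) $$ (i, j) = replace_row ?A (t - 1) ?v $$ (i, j)"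
  proof (cases "i = t - 1")
    case True
    then show ?thesis
      using i j St0 \<open>n t \<ge> 2\<close> le[of "Suc j"] by (auto simp: replace_row_def of_nat_diff)
  next
    case False
    then have "Suc i \<noteq> t" using St0 by auto
    then show ?thesis using False i j by (simp add: replace_row_def)
  qed
qed (auto simp: replace_row_def)

text \<open>Removing a vertex of type t with indegree type u changes only row t, by adding u minus the
  unit vector of t.  Weighted by multiplicities these changes sum to E t - n t e_t, which is minus
  row t; so by linearity in row t the weighted sum is (n t - 1) times the old determinant.\<close>

lemma det_laplacian_mat_pop:
  fixes c :: "(nat \<Rightarrow> nat) \<Rightarrow> nat"
  assumes t: "t \<in> {1..d}" and le: "\<And>u j. u \<in> U \<Longrightarrow> u j \<le> E t j"
    and vertices: "(\<Sum>u\<in>U. c u) = n t" and edges: "\<And>j. (\<Sum>u\<in>U. c u * u j) = E t j"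
    and "n t \<ge> 2"
  shows "(\<Sum>u\<in>U. int (c u) * det (laplacian_mat d (n(t := n t - 1)) (E(t := \<lambda>j. E t j - u j))))
     = int (n t - 1) * det (laplacian_mat d n E)"
proof -
  define A where "A = laplacian_mat d n E"
  have A: "A \<in> carrier_mat d d" by (simp add: A_def laplacian_mat_carrier)
  have t0: "t - 1 < d" using t by auto
  define v where "v u = (\<lambda>j. A $$ (t - 1, j) + int (u (Suc j)) - (if j = t - 1 then 1 else 0))" for u
  have combined: "(\<Sum>u\<in>U. int (c u) * v u j) = int (n t - 1) * A $$ (t - 1, j)" if j: "j < d" for j
  proof -
    define a where "a = A $$ (t - 1, j) - (if j = t - 1 then 1 else 0)"
    have row_t: "A $$ (t - 1, j) = (if j = t - 1 then int (n t) else 0) - int (E t (Suc j))"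
      using j t \<open>n t \<ge> 2\<close> by (auto simp: A_def)
    have "(\<Sum>u\<in>U. int (c u) * v u j) = (\<Sum>u\<in>U. int (c u) * a + int (c u * u (Suc j)))"
      by (rule sum.cong) (simp_all add: v_def a_def algebra_simps)
    also have "\<dots> = int (\<Sum>u\<in>U. c u) * a + int (\<Sum>u\<in>U. c u * u (Suc j))"
      by (simp add: sum.distrib sum_distrib_right)
    also have "\<dots> = int (n t - 1) * A $$ (t - 1, j)"
      using row_t \<open>n t \<ge> 2\<close> by (auto simp: vertices edges a_def algebra_simps of_nat_diff)
    finally show ?thesis .
  qed
  have "laplacian_mat d (n(t := n t - 1)) (E(t := \<lambda>j. E t j - u j)) = replace_row A (t - 1) (v u)"
    if "u \<in> U" for u
    using laplacian_mat_pop_eq_replace_row[where n=n and E=E and u=u and d=d, OF t \<open>n t \<ge> 2\<close> le[OF that]]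
    by (simp add: A_def v_def)
  then have "(\<Sum>u\<in>U. int (c u) * det (laplacian_mat d (n(t := n t - 1)) (E(t := \<lambda>j. E t j - u j))))
      = (\<Sum>u\<in>U. int (c u) * det (replace_row A (t - 1) (v u)))"
    by (intro sum.cong refl) (simp only:)
  also have "\<dots> = det (replace_row A (t - 1) (\<lambda>j. int (n t - 1) * A $$ (t - 1, j)))"
    by (rule det_replace_row_linear[OF A t0 combined])
  also have "\<dots> = int (n t - 1) * det A"
    by (rule det_replace_row_scaled[OF A t0])
  finally show ?thesis by (simp add: A_def)
qed

text \<open>Column t of both matrices is the unit vector, so both determinants are the cofactor at
  (t, t), which does not see row t.\<close>

lemma det_laplacian_mat_pop_last:
  assumes t: "t \<in> {1..d}" and "n t = 1" and col: "\<And>i. i \<in> {1..d} \<Longrightarrow> E i t = 0"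
  shows "det (laplacian_mat d (n(t := 0)) (E(t := \<lambda>j. E t j - u j))) = det (laplacian_mat d n E)"
proof -
  have t0: "t - 1 < d" and St0: "Suc (t - 1) = t" using t by auto
  have unit_col: "det (laplacian_mat d n' E') = cofactor (laplacian_mat d n' E') (t - 1) (t - 1)"
    if "n' t \<le> 1" "\<And>i. i \<in> {1..d} \<Longrightarrow> E' i t = 0" "n' t = 0 \<or> E' t t = 0" for n' E'
    by (rule det_unit_column[OF laplacian_mat_carrier t0]) (use that t0 St0 in auto)
  have "cofactor (laplacian_mat d (n(t := 0)) (E(t := \<lambda>j. E t j - u j))) (t - 1) (t - 1)
      = cofactor (laplacian_mat d n E) (t - 1) (t - 1)"
  proof (rule cofactor_eq_if_rows_agree[OF laplacian_mat_carrier laplacian_mat_carrier])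
    fix i j assume "i < d" "j < d" "i \<noteq> t - 1"
    moreover from this have "Suc i \<noteq> t" using St0 by auto
    ultimately show "laplacian_mat d (n(t := 0)) (E(t := \<lambda>j. E t j - u j)) $$ (i, j) = laplacian_mat d n E $$ (i, j)"
      by simp
  qed
  then show ?thesis
    using unit_col[of "n(t := 0)" "E(t := \<lambda>j. E t j - u j)"] unit_col[of n E] col t \<open>n t = 1\<close> by auto
qed

text \<open>For n t = 1 the factor fact (n t - 2) is fact 0 = 1 by truncated subtraction.\<close>

lemma det_laplacian_mat_recurrence:
  fixes c :: "(nat \<Rightarrow> nat) \<Rightarrow> nat"
  assumes t: "t \<in> {1..d}" and le: "\<And>u j. u \<in> U \<Longrightarrow> u j \<le> E t j"
    and vertices: "(\<Sum>u\<in>U. c u) = n t" and edges: "\<And>j. (\<Sum>u\<in>U. c u * u j) = E t j"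
    and "n t \<ge> 1" and leaf: "n t = 1 \<Longrightarrow> \<forall>i\<in>{1..d}. E i t = 0"
  shows "fact (n t - 2) * (\<Sum>u\<in>U. int (c u) * det (laplacian_mat d (n(t := n t - 1)) (E(t := \<lambda>j. E t j - u j))))
     = fact (n t - 1) * det (laplacian_mat d n E)"
proof (cases "n t = 1")
  case True
  have "det (laplacian_mat d (n(t := n t - 1)) (E(t := \<lambda>j. E t j - u j))) = det (laplacian_mat d n E)" for u
    using det_laplacian_mat_pop_last[where n=n and E=E and u=u, OF t True] leaf True by simp
  then have "(\<Sum>u\<in>U. int (c u) * det (laplacian_mat d (n(t := n t - 1)) (E(t := \<lambda>j. E t j - u j))))
      = int (\<Sum>u\<in>U. c u) * det (laplacian_mat d n E)"
    by (simp add: sum_distrib_right)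
  then show ?thesis using True vertices by simp
next
  case False
  then obtain m where m: "n t = Suc (Suc m)" using \<open>n t \<ge> 1\<close> by (cases "n t"; cases "n t - 1") auto
  have "(\<Sum>u\<in>U. int (c u) * det (laplacian_mat d (n(t := n t - 1)) (E(t := \<lambda>j. E t j - u j))))
      = int (n t - 1) * det (laplacian_mat d n E)"
    by (rule det_laplacian_mat_pop[OF t]) (use le vertices edges m in auto)
  then show ?thesis by (simp add: m)
qed

lemma filter_less_append_filter_not_less:
  "sorted (map f xs) \<Longrightarrow> filter (\<lambda>x. f x < c) xs @ filter (\<lambda>x. \<not> f x < c) xs = xs"
proof (induction xs)
  case (Cons x xs)
  show ?case
  proof (cases "f x < c")
    case False
    then have "\<forall>y\<in>set xs. \<not> f y < c" using Cons.prems by fastforce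
    then show ?thesis using False by (simp add: filter_empty_conv)
  qed (use Cons in auto)
qed simp

lemma concat_filter_key_upt:
  "sorted (map f xs) \<Longrightarrow> \<forall>x\<in>set xs. a \<le> f x \<and> f x < b
    \<Longrightarrow> concat (map (\<lambda>j. filter (\<lambda>x. f x = j) xs) [a..<b]) = xs"
proof (induction b arbitrary: xs)
  case (Suc b)
  show ?case
  proof (cases "a \<le> b")
    case False
    then have "xs = []" using Suc.prems(2) by (cases xs) auto
    then show ?thesis by simp
  next
    case True
    define ys where "ys = filter (\<lambda>x. f x < b) xs"
    have IH: "concat (map (\<lambda>j. filter (\<lambda>x. f x = j) ys) [a..<b]) = ys"
      using Suc.IH[OF sorted_filter[OF Suc.prems(1)]] Suc.prems(2) unfolding ys_def by auto
    have "map (\<lambda>j. filter (\<lambda>x. f x = j) xs) [a..<b] = map (\<lambda>j. filter (\<lambda>x. f x = j) ys) [a..<b]"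
      unfolding ys_def by (intro map_cong) (auto intro: filter_cong)
    then have "concat (map (\<lambda>j. filter (\<lambda>x. f x = j) xs) [a..<b]) = ys"
      using IH by (simp only:)
    moreover have "filter (\<lambda>x. \<not> f x < b) xs = filter (\<lambda>x. f x = b) xs"
      using Suc.prems(2) by (intro filter_cong) auto
    ultimately show ?thesis
      using True filter_less_append_filter_not_less[OF Suc.prems(1), of b] by (simp add: ys_def)
  qed
qed simp

lemma sorted_map_concat_upt:
  assumes "\<And>j x. x \<in> set (g j) \<Longrightarrow> f x = (j :: nat)"
  shows "sorted (map f (concat (map g [a..<b])))"
proof (induction b)
  case (Suc b)
  have "sorted (map f (g b))"
    using assms[of _ b] by (simp add: sorted_iff_nth_mono)
  moreover have "f x \<le> f y" if "x \<in> set (concat (map g [a..<b]))" "y \<in> set (g b)" for x y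
    using that assms by fastforce
  ultimately show ?case using Suc by (auto simp: sorted_append)
qed simp

lemma filter_key_concat_upt:
  assumes "\<And>j x. x \<in> set (g j) \<Longrightarrow> f x = (j :: nat)" and "a \<le> j" "j < b"
  shows "filter (\<lambda>x. f x = j) (concat (map g [a..<b])) = g j"
  using assms(2,3)
proof (induction b)
  case (Suc b)
  have "filter (\<lambda>x. f x = j) (g b) = (if j = b then g b else [])"
    using assms(1)[of _ b] by (auto simp: filter_empty_conv)
  moreover have "filter (\<lambda>x. f x = b) (concat (map g [a..<b])) = []"
    using assms(1) by (fastforce simp: filter_empty_conv)
  ultimately show ?case using Suc by (cases "j = b") auto
qed simp

definition of_type :: "pforest \<Rightarrow> nat \<Rightarrow> pforest" where
  "of_type F j = filter (\<lambda>T. root_type T = j) F"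

lemma root_type_of_type: "T \<in> set (of_type F j) \<Longrightarrow> root_type T = j"
  by (simp add: of_type_def)

lemma indeg_type_eq_length_of_type: "indeg_type v j = length (of_type (children v) j)"
  by (simp add: indeg_type_def of_type_def)

lemma root_type_wf_tree: "wf_tree d T \<Longrightarrow> root_type T \<in> {1..d}"
  by (cases T) auto

lemma concat_of_type: "wf_forest d F \<Longrightarrow> concat (map (of_type F) [1..<Suc d]) = F"
  unfolding of_type_def wf_forest_def
  by (rule concat_filter_key_upt) (auto dest!: root_type_wf_tree)

lemma of_type_concat:
  assumes "\<And>j T. T \<in> set (g j) \<Longrightarrow> root_type T = j" and "j \<in> {1..d}"
  shows "of_type (concat (map g [1..<Suc d])) j = g j"
  unfolding of_type_def by (rule filter_key_concat_upt) (use assms in auto)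

lemma wf_forest_concat:
  assumes "\<And>j T. T \<in> set (g j) \<Longrightarrow> root_type T = j \<and> wf_tree d T"
  shows "wf_forest d (concat (map g [1..<Suc d]))"
  unfolding wf_forest_def using assms by (auto intro: sorted_map_concat_upt simp del: upt_Suc)

lemma mset_concat_upt: "mset (concat (map g [1..<Suc d])) = (\<Sum>j\<in>{1..d}. mset (g j))"
  by (simp add: mset_concat o_def interv_sum_list_conv_sum_set_nat atLeastLessThanSuc_atLeastAtMost
      del: upt_Suc)

lemma mset_eq_sum_of_type: "wf_forest d F \<Longrightarrow> mset F = (\<Sum>j\<in>{1..d}. mset (of_type F j))"
  using mset_concat_upt[of "of_type F" d] concat_of_type[of d F] by simp

section \<open>Signatures\<close>

definition signature :: "ptree \<Rightarrow> nat \<times> (nat \<Rightarrow> nat)" where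
  "signature v = (root_type v, indeg_type v)"

definition signatures :: "pforest \<Rightarrow> (nat \<times> (nat \<Rightarrow> nat)) multiset" where
  "signatures F = mset (map signature (vertices F))"

lemma signatures_Nil [simp]: "signatures [] = {#}"
  by (simp add: signatures_def vertices_def)

lemma signatures_append: "signatures (F @ G) = signatures F + signatures G"
  by (simp add: signatures_def vertices_def)

lemma signatures_Cons: "signatures (T # F) = signatures [T] + signatures F"
  using signatures_append[of "[T]" F] by simp

lemma signatures_Node:
  "signatures [Node t cs] = add_mset (t, indeg_type (Node t cs)) (signatures cs)"
  by (simp add: signatures_def vertices_def signature_def)

lemma signatures_eq_sum_mset: "signatures F = (\<Sum>T\<in>#mset F. signatures [T])"
proof (induction F)
  case (Cons T F)
  then show ?case using signatures_Cons[of T F] by simp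
qed simp

lemma signatures_cong_mset: "mset F = mset G \<Longrightarrow> signatures F = signatures G"
  by (metis signatures_eq_sum_mset)

lemma signatures_eq_empty:
  assumes "signatures F = {#}"
  shows "F = []"
proof (cases F)
  case (Cons T F')
  obtain t cs where "T = Node t cs" by (cases T)
  then show ?thesis using assms Cons signatures_Cons[of T F'] by (simp add: signatures_Node)
qed

lemma signature_in_signatures:
  assumes "T \<in> set F"
  shows "signature T \<in># signatures F"
proof -
  have "T \<in> set (subtrees T)" by (cases T) simp
  then show ?thesis using assms by (auto simp: signatures_def vertices_def)
qed

definition forests_with :: "nat \<Rightarrow> (nat \<Rightarrow> nat) \<Rightarrow> (nat \<times> (nat \<Rightarrow> nat)) multiset \<Rightarrow> pforest set" where
  "forests_with d r D = {F. wf_forest d F \<and> (\<forall>j\<in>{1..d}. length (of_type F j) = r j) \<and> signatures F = D}"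

section \<open>Removing the first root of a given type\<close>

text \<open>The first root of type t is deleted and its children become the first roots of their
  types; push_root undoes this, taking the first u j roots of each type j as the children of a
  new first root of type t.\<close>

definition pop_root :: "nat \<Rightarrow> nat \<Rightarrow> pforest \<Rightarrow> (nat \<Rightarrow> nat) \<times> pforest" where
  "pop_root d t F = (indeg_type (hd (of_type F t)),
     concat (map (\<lambda>j. of_type (children (hd (of_type F t))) j
       @ (if j = t then tl (of_type F t) else of_type F j)) [1..<Suc d]))"

definition first_roots :: "nat \<Rightarrow> (nat \<Rightarrow> nat) \<Rightarrow> pforest \<Rightarrow> pforest" where
  "first_roots d u F = concat (map (\<lambda>j. take (u j) (of_type F j)) [1..<Suc d])"

definition push_root :: "nat \<Rightarrow> nat \<Rightarrow> (nat \<Rightarrow> nat) \<Rightarrow> pforest \<Rightarrow> pforest" where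
  "push_root d t u F = concat (map (\<lambda>j. (if j = t then [Node t (first_roots d u F)] else [])
     @ drop (u j) (of_type F j)) [1..<Suc d])"

definition roots_after_pop :: "(nat \<Rightarrow> nat) \<Rightarrow> nat \<Rightarrow> (nat \<Rightarrow> nat) \<Rightarrow> nat \<Rightarrow> nat" where
  "roots_after_pop r t u j = r j + u j - (if j = t then 1 else 0)"

lemma of_type_pop_root:
  assumes "j \<in> {1..d}"
  shows "of_type (snd (pop_root d t F)) j
    = of_type (children (hd (of_type F t))) j @ (if j = t then tl (of_type F t) else of_type F j)"
proof -
  have "root_type T = t" if "T \<in> set (tl (of_type F t))" for T
    using that by (cases "of_type F t = []") (auto dest: list.set_sel(2) root_type_of_type)
  then show ?thesis
    unfolding pop_root_def snd_conv
    by (intro of_type_concat) (use assms in \<open>auto dest: root_type_of_type split: if_splits\<close>)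
qed

lemma of_type_first_roots:
  assumes "j \<in> {1..d}"
  shows "of_type (first_roots d u F) j = take (u j) (of_type F j)"
  unfolding first_roots_def
  by (rule of_type_concat) (use assms in \<open>auto dest: in_set_takeD root_type_of_type\<close>)

lemma of_type_push_root:
  assumes "j \<in> {1..d}"
  shows "of_type (push_root d t u F) j
    = (if j = t then [Node t (first_roots d u F)] else []) @ drop (u j) (of_type F j)"
  unfolding push_root_def
  by (rule of_type_concat) (use assms in \<open>auto dest: in_set_dropD root_type_of_type split: if_splits\<close>)

lemma wf_forest_first_roots:
  "wf_forest d F \<Longrightarrow> wf_forest d (first_roots d u F)"
  unfolding first_roots_def
  by (rule wf_forest_concat) (auto dest: in_set_takeD simp: of_type_def wf_forest_def)

lemma indeg_type_first_roots:
  assumes "\<And>j. j \<notin> {1..d} \<Longrightarrow> u j = 0" and "\<And>j. j \<in> {1..d} \<Longrightarrow> u j \<le> length (of_type F j)"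
  shows "indeg_type (Node t (first_roots d u F)) = u"
proof
  fix j
  show "indeg_type (Node t (first_roots d u F)) j = u j"
  proof (cases "j \<in> {1..d}")
    case True
    then show ?thesis using assms(2) by (simp add: indeg_type_eq_length_of_type of_type_first_roots)
  next
    case False
    have "of_type (first_roots d u F) j = []"
      using False by (auto simp: first_roots_def of_type_def filter_empty_conv dest!: in_set_takeD)
    then show ?thesis using False assms(1) by (simp add: indeg_type_eq_length_of_type)
  qed
qed

lemma push_pop_root:
  assumes wf: "wf_forest d F" and nonempty: "of_type F t \<noteq> []"
  shows "push_root d t (fst (pop_root d t F)) (snd (pop_root d t F)) = F"
proof -
  define T where "T = hd (of_type F t)"
  define u where "u = indeg_type T"
  define F' where "F' = snd (pop_root d t F)"
  have "T \<in> set F" "root_type T = t"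
    using hd_in_set[OF nonempty] by (auto simp: T_def of_type_def)
  moreover obtain cs where T: "T = Node t cs" using \<open>root_type T = t\<close> by (cases T) auto
  ultimately have wf_cs: "wf_forest d cs" using wf by (auto simp: wf_forest_def)
  have "of_type F t = T # tl (of_type F t)"
    using nonempty by (simp add: T_def)
  then have first_of_type: "of_type F t = Node t cs # tl (of_type F t)"
    by (simp only: T)
  have F': "of_type F' j = of_type cs j @ (if j = t then tl (of_type F t) else of_type F j)"
    if "j \<in> {1..d}" for j
    using that by (simp add: F'_def of_type_pop_root flip: T_def) (simp add: T)
  have u: "u j = length (of_type cs j)" for j
    by (simp add: u_def T indeg_type_eq_length_of_type)
  have "first_roots d u F' = concat (map (of_type cs) [1..<Suc d])"
    unfolding first_roots_def by (intro arg_cong[where f=concat] map_cong) (auto simp: F' u)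
  then have children: "first_roots d u F' = cs"
    using concat_of_type[OF wf_cs] by simp
  have "push_root d t u F' = concat (map (of_type F) [1..<Suc d])"
    unfolding push_root_def children
    by (intro arg_cong[where f=concat] map_cong) (use first_of_type in \<open>auto simp: F' u\<close>)
  then show ?thesis using concat_of_type[OF wf] by (simp add: u_def T_def F'_def pop_root_def)
qed

lemma pop_push_root:
  assumes wf: "wf_forest d F" and t: "t \<in> {1..d}"
    and u_outside: "\<And>j. j \<notin> {1..d} \<Longrightarrow> u j = 0" and u_le: "\<And>j. j \<in> {1..d} \<Longrightarrow> u j \<le> length (of_type F j)"
  shows "pop_root d t (push_root d t u F) = (u, F)"
proof -
  define G where "G = push_root d t u F"
  have G: "of_type G j = (if j = t then [Node t (first_roots d u F)] else []) @ drop (u j) (of_type F j)"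
    if "j \<in> {1..d}" for j
    using that by (simp add: G_def of_type_push_root)
  have hd_G: "hd (of_type G t) = Node t (first_roots d u F)" and tl_G: "tl (of_type G t) = drop (u t) (of_type F t)"
    using G[OF t] by simp_all
  have "snd (pop_root d t G) = concat (map (of_type F) [1..<Suc d])"
    unfolding pop_root_def snd_conv hd_G children.simps
    by (intro arg_cong[where f=concat] map_cong) (auto simp: of_type_first_roots tl_G G)
  moreover have "fst (pop_root d t G) = u"
    using indeg_type_first_roots[of d u F t] u_outside u_le by (simp add: pop_root_def hd_G)
  ultimately show ?thesis using concat_of_type[OF wf] by (simp add: G_def prod_eq_iff)
qed

lemma first_root_of_type:
  assumes "wf_forest d F" and "of_type F t \<noteq> []"
  obtains cs where "hd (of_type F t) = Node t cs" "Node t cs \<in> set F" "wf_forest d cs"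
proof -
  have T: "hd (of_type F t) \<in> set F" "root_type (hd (of_type F t)) = t"
    using hd_in_set[OF assms(2)] by (auto simp: of_type_def)
  obtain cs where "hd (of_type F t) = Node t cs" using T(2) by (cases "hd (of_type F t)") auto
  then show ?thesis using that T(1) assms(1) by (auto simp: wf_forest_def)
qed

lemma wf_forest_pop_root:
  assumes wf: "wf_forest d F" and nonempty: "of_type F t \<noteq> []"
  shows "wf_forest d (snd (pop_root d t F))"
proof -
  obtain cs where T: "hd (of_type F t) = Node t cs" and wf_cs: "wf_forest d cs"
    using first_root_of_type[OF assms] by metis
  have of_type_wf: "root_type T = j \<and> wf_tree d T" if "wf_forest d G" "T \<in> set (of_type G j)" for G T j
    using that by (auto simp: of_type_def wf_forest_def)
  have "set (tl (of_type F t)) \<subseteq> set (of_type F t)"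
    using nonempty by (cases "of_type F t") auto
  then show ?thesis
    unfolding pop_root_def snd_conv T children.simps
    by (intro wf_forest_concat) (auto split: if_splits dest: of_type_wf[OF wf] of_type_wf[OF wf_cs])
qed

lemma wf_forest_push_root:
  assumes wf: "wf_forest d F" and t: "t \<in> {1..d}"
  shows "wf_forest d (push_root d t u F)"
proof -
  have "wf_tree d (Node t (first_roots d u F))"
    using wf_forest_first_roots[OF wf] t by (simp add: wf_forest_def)
  then show ?thesis
    unfolding push_root_def using wf
    by (intro wf_forest_concat) (auto simp: of_type_def wf_forest_def dest: in_set_dropD split: if_splits)
qed

lemma mset_pop_root:
  assumes wf: "wf_forest d F" and t: "t \<in> {1..d}" and nonempty: "of_type F t \<noteq> []"
  shows "mset (snd (pop_root d t F)) + {#hd (of_type F t)#} = mset (children (hd (of_type F t))) + mset F"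
proof -
  define T where "T = hd (of_type F t)"
  define R where "R j = (if j = t then tl (of_type F t) else of_type F j)" for j
  obtain cs where T: "T = Node t cs" and wf_cs: "wf_forest d cs"
    using first_root_of_type[OF wf nonempty] by (auto simp: T_def)
  have "mset (snd (pop_root d t F)) = (\<Sum>j\<in>{1..d}. mset (of_type cs j) + mset (R j))"
    unfolding pop_root_def snd_conv mset_concat_upt by (simp add: T_def[symmetric] T R_def)
  also have "\<dots> = mset cs + (\<Sum>j\<in>{1..d}. mset (R j))"
    by (simp add: sum.distrib mset_eq_sum_of_type[OF wf_cs])
  finally have popped: "mset (snd (pop_root d t F)) = mset cs + (\<Sum>j\<in>{1..d}. mset (R j))" .
  have "mset (of_type F j) = mset (R j) + (if j = t then {#T#} else {#})" for j
    using nonempty by (cases "of_type F t") (auto simp: R_def T_def)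
  then have "mset F = (\<Sum>j\<in>{1..d}. mset (R j)) + {#T#}"
    using t by (simp add: mset_eq_sum_of_type[OF wf] sum.distrib)
  then show ?thesis using popped by (simp add: T_def[symmetric] T)
qed

lemma mset_push_root:
  assumes wf: "wf_forest d F" and t: "t \<in> {1..d}"
  shows "mset (push_root d t u F) + mset (first_roots d u F) = mset F + {#Node t (first_roots d u F)#}"
proof -
  have "(\<Sum>j\<in>{1..d}. mset (if j = t then [N] else [])) = {#N#}" for N :: ptree
  proof -
    have "(\<Sum>j\<in>{1..d}. mset (if j = t then [N] else [])) = (\<Sum>j\<in>{1..d}. if j = t then {#N#} else {#})"
      by (rule sum.cong) auto
    then show ?thesis using t by simp
  qed
  then have "mset (push_root d t u F)
      = {#Node t (first_roots d u F)#} + (\<Sum>j\<in>{1..d}. mset (drop (u j) (of_type F j)))"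
    unfolding push_root_def mset_concat_upt by (simp add: sum.distrib)
  moreover have "mset (first_roots d u F) = (\<Sum>j\<in>{1..d}. mset (take (u j) (of_type F j)))"
    unfolding first_roots_def mset_concat_upt ..
  moreover have "mset F = (\<Sum>j\<in>{1..d}. mset (take (u j) (of_type F j)) + mset (drop (u j) (of_type F j)))"
    unfolding mset_eq_sum_of_type[OF wf] by (simp flip: mset_append)
  ultimately show ?thesis by (simp add: sum.distrib)
qed

lemma signatures_pop_root:
  assumes "wf_forest d F" and "t \<in> {1..d}" and "of_type F t \<noteq> []"
  shows "signatures (snd (pop_root d t F)) = signatures F - {#(t, fst (pop_root d t F))#}"
proof -
  obtain cs where T: "hd (of_type F t) = Node t cs" using first_root_of_type[OF assms(1,3)] by blast
  have "signatures (snd (pop_root d t F) @ [Node t cs]) = signatures (cs @ F)"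
    using mset_pop_root[OF assms] by (intro signatures_cong_mset) (simp add: T)
  then have "signatures F = add_mset (t, fst (pop_root d t F)) (signatures (snd (pop_root d t F)))"
    by (simp add: signatures_append signatures_Node pop_root_def T)
  then show ?thesis by simp
qed

lemma signatures_push_root:
  assumes "wf_forest d F" and "t \<in> {1..d}"
    and "\<And>j. j \<notin> {1..d} \<Longrightarrow> u j = 0" and "\<And>j. j \<in> {1..d} \<Longrightarrow> u j \<le> length (of_type F j)"
  shows "signatures (push_root d t u F) = add_mset (t, u) (signatures F)"
proof -
  have "signatures (push_root d t u F @ first_roots d u F) = signatures (F @ [Node t (first_roots d u F)])"
    using mset_push_root[OF assms(1,2)] by (intro signatures_cong_mset) simp
  then show ?thesis
    using indeg_type_first_roots[of d u F t] assms(3,4)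
    by (simp add: signatures_append signatures_Node)
qed

lemma pop_root_in_forests_with:
  assumes F: "F \<in> forests_with d r D" and t: "t \<in> {1..d}" and "r t \<ge> 1"
  shows "pop_root d t F \<in> (SIGMA u:{u. (t, u) \<in># D}. forests_with d (roots_after_pop r t u) (D - {#(t, u)#}))"
proof -
  have wf: "wf_forest d F" and roots: "\<forall>j\<in>{1..d}. length (of_type F j) = r j" and sig: "signatures F = D"
    using F by (auto simp: forests_with_def)
  have "length (of_type F t) = r t" using roots t by blast
  then have nonempty: "of_type F t \<noteq> []" using \<open>r t \<ge> 1\<close> by auto
  obtain cs where T: "hd (of_type F t) = Node t cs" and "Node t cs \<in> set F"
    using first_root_of_type[OF wf nonempty] by blast
  define u where "u = fst (pop_root d t F)"
  have u: "u = indeg_type (Node t cs)" by (simp add: u_def pop_root_def T)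
  have "(t, u) \<in># D"
    using signature_in_signatures[OF \<open>Node t cs \<in> set F\<close>] sig u by (simp add: signature_def)
  moreover have "length (of_type (snd (pop_root d t F)) j) = roots_after_pop r t u j" if "j \<in> {1..d}" for j
    using that roots \<open>r t \<ge> 1\<close>
    by (simp add: of_type_pop_root T u indeg_type_eq_length_of_type roots_after_pop_def add.commute)
  ultimately have "(u, snd (pop_root d t F))
      \<in> (SIGMA u:{u. (t, u) \<in># D}. forests_with d (roots_after_pop r t u) (D - {#(t, u)#}))"
    using wf_forest_pop_root[OF wf nonempty] signatures_pop_root[OF wf t nonempty, folded u_def] sig
    by (simp add: forests_with_def)
  then show ?thesis by (simp add: u_def)
qed

lemma push_root_in_forests_with:
  assumes F: "F \<in> forests_with d (roots_after_pop r t u) (D - {#(t, u)#})"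
    and t: "t \<in> {1..d}" and "r t \<ge> 1" and "(t, u) \<in># D" and outside: "\<And>j. j \<notin> {1..d} \<Longrightarrow> u j = 0"
  shows "push_root d t u F \<in> forests_with d r D"
proof -
  have wf: "wf_forest d F" and roots: "\<And>j. j \<in> {1..d} \<Longrightarrow> length (of_type F j) = roots_after_pop r t u j"
    and sig: "signatures F = D - {#(t, u)#}"
    using F by (auto simp: forests_with_def)
  have le: "u j \<le> length (of_type F j)" if "j \<in> {1..d}" for j
    using roots[OF that] \<open>r t \<ge> 1\<close> by (auto simp: roots_after_pop_def)
  have "length (of_type (push_root d t u F) j) = r j" if "j \<in> {1..d}" for j
    using roots[OF that] \<open>r t \<ge> 1\<close> that by (auto simp: of_type_push_root roots_after_pop_def)
  then show ?thesis
    using wf_forest_push_root[OF wf t] signatures_push_root[OF wf t outside le] sig \<open>(t, u) \<in># D\<close>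
    by (simp add: forests_with_def)
qed

lemma bij_betw_pop_root:
  assumes t: "t \<in> {1..d}" and "r t \<ge> 1"
    and valid: "\<forall>x\<in>#D. \<forall>j. j \<notin> {1..d} \<longrightarrow> snd x j = 0"
  shows "bij_betw (pop_root d t) (forests_with d r D)
    (SIGMA u:{u. (t, u) \<in># D}. forests_with d (roots_after_pop r t u) (D - {#(t, u)#}))"
proof (rule bij_betw_byWitness[where f'="\<lambda>(u, F). push_root d t u F"])
  show "\<forall>F\<in>forests_with d r D. (\<lambda>(u, F). push_root d t u F) (pop_root d t F) = F"
  proof
    fix F assume "F \<in> forests_with d r D"
    then have "wf_forest d F" and "length (of_type F t) = r t" using t by (auto simp: forests_with_def)
    moreover from this(2) have "of_type F t \<noteq> []" using \<open>r t \<ge> 1\<close> by auto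
    ultimately show "(\<lambda>(u, F). push_root d t u F) (pop_root d t F) = F"
      by (simp add: push_pop_root case_prod_beta)
  qed
  show "pop_root d t ` forests_with d r D
      \<subseteq> (SIGMA u:{u. (t, u) \<in># D}. forests_with d (roots_after_pop r t u) (D - {#(t, u)#}))"
    using pop_root_in_forests_with[where d=d and r=r and D=D and t=t] t \<open>r t \<ge> 1\<close> by blast
  show "\<forall>x\<in>(SIGMA u:{u. (t, u) \<in># D}. forests_with d (roots_after_pop r t u) (D - {#(t, u)#})).
      pop_root d t ((\<lambda>(u, F). push_root d t u F) x) = x"
  proof (clarsimp)
    fix u F assume "(t, u) \<in># D" and F: "F \<in> forests_with d (roots_after_pop r t u) (D - {#(t, u)#})"
    then have "u j = 0" if "j \<notin> {1..d}" for j using valid that by fastforce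
    moreover have "u j \<le> length (of_type F j)" if "j \<in> {1..d}" for j
      using F that \<open>r t \<ge> 1\<close> by (auto simp: forests_with_def roots_after_pop_def)
    ultimately show "pop_root d t (push_root d t u F) = (u, F)"
      using pop_push_root[OF _ t] F by (auto simp: forests_with_def)
  qed
  show "(\<lambda>(u, F). push_root d t u F) ` (SIGMA u:{u. (t, u) \<in># D}. forests_with d (roots_after_pop r t u) (D - {#(t, u)#}))
      \<subseteq> forests_with d r D"
    using push_root_in_forests_with[where d=d and r=r and D=D and t=t] t \<open>r t \<ge> 1\<close> valid by fastforce
qed

section \<open>Counting forests with a given signature\<close>

definition type_count :: "(nat \<times> (nat \<Rightarrow> nat)) multiset \<Rightarrow> nat \<Rightarrow> nat" where
  "type_count D i = size (filter_mset (\<lambda>x. fst x = i) D)"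

definition edge_count :: "(nat \<times> (nat \<Rightarrow> nat)) multiset \<Rightarrow> nat \<Rightarrow> nat \<Rightarrow> nat" where
  "edge_count D i j = (\<Sum>x\<in>#filter_mset (\<lambda>x. fst x = i) D. snd x j)"

definition mult_fact :: "'a multiset \<Rightarrow> nat" where
  "mult_fact D = (\<Prod>x\<in>set_mset D. fact (count D x))"

lemma mult_fact_remove:
  assumes x: "x \<in># D"
  shows "mult_fact D = count D x * mult_fact (D - {#x#})"
proof -
  define D' where "D' = D - {#x#}"
  have count_x: "count D x = Suc (count D' x)" using x by (simp add: D'_def)
  have count_y: "count D' y = count D y" if "y \<noteq> x" for y using that by (simp add: D'_def)
  have sub: "set_mset D' \<subseteq> set_mset D" by (simp add: D'_def in_diffD subsetI)
  have "mult_fact D' = (\<Prod>y\<in>set_mset D. fact (count D' y))"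
    unfolding mult_fact_def by (rule prod.mono_neutral_left) (use sub in \<open>auto simp: not_in_iff\<close>)
  also have "\<dots> = fact (count D' x) * (\<Prod>y\<in>set_mset D - {x}. fact (count D' y))"
    using x by (simp add: prod.remove)
  also have "(\<Prod>y\<in>set_mset D - {x}. fact (count D' y)) = (\<Prod>y\<in>set_mset D - {x}. fact (count D y))"
    by (rule prod.cong) (auto simp: count_y)
  finally have "mult_fact D' = fact (count D' x) * (\<Prod>y\<in>set_mset D - {x}. fact (count D y))" .
  moreover have "mult_fact D = fact (count D x) * (\<Prod>y\<in>set_mset D - {x}. fact (count D y))"
    unfolding mult_fact_def using x by (simp add: prod.remove)
  ultimately show ?thesis using count_x by (simp add: D'_def[symmetric] algebra_simps)
qed

lemma sum_mset_eq_sum_count: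
  fixes g :: "'a \<Rightarrow> nat"
  shows "(\<Sum>x\<in>#M. g x) = (\<Sum>x\<in>set_mset M. count M x * g x)"
proof -
  obtain xs where M: "M = mset xs" using ex_mset[of M] by metis
  have "(\<Sum>x\<in>#M. g x) = sum_list (map g xs)"
    unfolding M mset_map[symmetric] sum_mset_sum_list ..
  also have "\<dots> = (\<Sum>x\<in>set xs. count_list xs x * g x)" by (rule sum_list_map_eq_sum_count)
  also have "\<dots> = (\<Sum>x\<in>set_mset M. count M x * g x)" by (simp add: M count_mset)
  finally show ?thesis .
qed

lemma sum_count_fst_eq:
  fixes f :: "(nat \<Rightarrow> nat) \<Rightarrow> nat"
  assumes "finite B" and "{u. (t, u) \<in># D} \<subseteq> B"
  shows "(\<Sum>u\<in>B. count D (t, u) * f u) = (\<Sum>x\<in>#filter_mset (\<lambda>x. fst x = t) D. f (snd x))"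
proof -
  have set: "set_mset (filter_mset (\<lambda>x. fst x = t) D) = Pair t ` {u. (t, u) \<in># D}"
    by auto
  have "(\<Sum>u\<in>B. count D (t, u) * f u) = (\<Sum>u\<in>{u. (t, u) \<in># D}. count D (t, u) * f u)"
    by (rule sum.mono_neutral_right) (use assms in \<open>auto simp: not_in_iff\<close>)
  also have "\<dots> = (\<Sum>x\<in>#filter_mset (\<lambda>x. fst x = t) D. f (snd x))"
    unfolding sum_mset_eq_sum_count set by (subst sum.reindex) (auto simp: inj_on_def)
  finally show ?thesis .
qed

lemma finite_snd_fst: "finite {u. (t, u) \<in># D}"
proof -
  have "{u. (t, u) \<in># D} \<subseteq> snd ` set_mset D" by force
  then show ?thesis by (rule finite_subset) simp
qed

lemma type_count_add_mset: "type_count (add_mset x D) i = type_count D i + (if fst x = i then 1 else 0)"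
  by (simp add: type_count_def)

lemma edge_count_add_mset: "edge_count (add_mset x D) i j = edge_count D i j + (if fst x = i then snd x j else 0)"
  by (simp add: edge_count_def)

lemma edge_count_eq_0: "type_count D i = 0 \<Longrightarrow> edge_count D i j = 0"
  by (auto simp: type_count_def edge_count_def)

lemma type_count_remove:
  assumes "(t, u) \<in># D"
  shows "type_count (D - {#(t, u)#}) = (type_count D)(t := type_count D t - 1)"
proof
  fix i
  obtain D' where D: "D = add_mset (t, u) D'" using assms by (metis insert_DiffM)
  then show "type_count (D - {#(t, u)#}) i = ((type_count D)(t := type_count D t - 1)) i"
    by (simp add: type_count_add_mset)
qed

lemma edge_count_remove:
  assumes "(t, u) \<in># D"
  shows "edge_count (D - {#(t, u)#}) = (edge_count D)(t := \<lambda>j. edge_count D t j - u j)"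
proof (intro ext)
  fix i j
  obtain D' where D: "D = add_mset (t, u) D'" using assms by (metis insert_DiffM)
  then show "edge_count (D - {#(t, u)#}) i j = ((edge_count D)(t := \<lambda>j. edge_count D t j - u j)) i j"
    by (simp add: edge_count_add_mset)
qed

lemma le_edge_count:
  assumes "(t, u) \<in># D"
  shows "u j \<le> edge_count D t j"
proof -
  obtain D' where D: "D = add_mset (t, u) D'" using assms by (metis insert_DiffM)
  then show ?thesis by (simp add: edge_count_add_mset)
qed

definition valid_signatures :: "nat \<Rightarrow> (nat \<times> (nat \<Rightarrow> nat)) multiset \<Rightarrow> bool" where
  "valid_signatures d D \<longleftrightarrow> (\<forall>x\<in>#D. fst x \<in> {1..d} \<and> (\<forall>j. j \<notin> {1..d} \<longrightarrow> snd x j = 0))"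

text \<open>Each vertex of type j is a root or the child of a unique vertex.\<close>

definition balanced :: "nat \<Rightarrow> (nat \<Rightarrow> nat) \<Rightarrow> (nat \<times> (nat \<Rightarrow> nat)) multiset \<Rightarrow> bool" where
  "balanced d r D \<longleftrightarrow> (\<forall>j\<in>{1..d}. type_count D j = r j + (\<Sum>i=1..d. edge_count D i j))"

lemma card_forests_with_empty:
  assumes "balanced d r {#}"
  shows "finite (forests_with d r {#}) \<and> int (card (forests_with d r {#}) * mult_fact {#})
    = (\<Prod>j=1..d. fact (type_count {#} j - 1)) * det (laplacian_mat d (type_count {#}) (edge_count {#}))"
proof -
  have "r j = 0" if "j \<in> {1..d}" for j
    using assms that by (simp add: balanced_def type_count_def edge_count_def)
  then have "forests_with d r {#} = {[]}"
    by (auto simp: forests_with_def wf_forest_def of_type_def dest: signatures_eq_empty)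
  moreover have "laplacian_mat d (type_count {#}) (edge_count {#}) = 1\<^sub>m d"
    by (rule eq_matI) (auto simp: type_count_def edge_count_def)
  ultimately show ?thesis by (simp add: mult_fact_def type_count_def)
qed

lemma card_forests_with_no_roots:
  assumes "D \<noteq> {#}" and valid: "valid_signatures d D" and balanced: "balanced d r D"
    and no_roots: "\<forall>j\<in>{1..d}. r j = 0"
  shows "finite (forests_with d r D) \<and> int (card (forests_with d r D) * mult_fact D)
    = (\<Prod>j=1..d. fact (type_count D j - 1)) * det (laplacian_mat d (type_count D) (edge_count D))"
proof -
  have empty: "forests_with d r D = {}"
  proof (rule ccontr)
    assume "forests_with d r D \<noteq> {}"
    then obtain F where F: "F \<in> forests_with d r D" by blast
    then have "F \<noteq> []" using \<open>D \<noteq> {#}\<close> by (auto simp: forests_with_def)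
    then obtain T where T: "T \<in> set F" by (cases F) auto
    then have "wf_tree d T" using F by (auto simp: forests_with_def wf_forest_def)
    then have "root_type T \<in> {1..d}" by (rule root_type_wf_tree)
    moreover have "of_type F (root_type T) \<noteq> []" using T by (auto simp: of_type_def filter_empty_conv)
    moreover have "length (of_type F (root_type T)) = r (root_type T)"
      using F \<open>root_type T \<in> {1..d}\<close> by (simp add: forests_with_def)
    ultimately show False using no_roots by simp
  qed
  obtain x where x: "x \<in># D" using \<open>D \<noteq> {#}\<close> by (meson multiset_nonemptyE)
  have "det (laplacian_mat d (type_count D) (edge_count D)) = 0"
  proof (rule det_laplacian_mat_eq_0)
    show "fst x \<in> {1..d}" using valid x by (auto simp: valid_signatures_def)
    have "x \<in># filter_mset (\<lambda>y. fst y = fst x) D" using x by simp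
    then obtain M where "filter_mset (\<lambda>y. fst y = fst x) D = add_mset x M"
      by (blast dest: multi_member_split)
    then show "type_count D (fst x) > 0" by (simp add: type_count_def)
  next
    show "type_count D j = (\<Sum>i=1..d. edge_count D i j)" if "j \<in> {1..d}" for j
      using balanced no_roots that by (simp add: balanced_def)
  qed (rule edge_count_eq_0)
  then show ?thesis using empty by simp
qed

lemma valid_signatures_remove: "valid_signatures d D \<Longrightarrow> valid_signatures d (D - {#x#})"
  by (auto simp: valid_signatures_def dest: in_diffD)

lemma balanced_pop:
  assumes bal: "balanced d r D" and "(t, u) \<in># D" and t: "t \<in> {1..d}" and "r t \<ge> 1"
  shows "balanced d (roots_after_pop r t u) (D - {#(t, u)#})"
  unfolding balanced_def
proof
  fix j assume j: "j \<in> {1..d}"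
  obtain D' where D: "D = add_mset (t, u) D'" using assms(2) by (metis insert_DiffM)
  have "(\<Sum>i=1..d. edge_count D i j) = (\<Sum>i=1..d. edge_count D' i j + (if t = i then u j else 0))"
    by (intro sum.cong refl) (simp add: D edge_count_add_mset)
  also have "\<dots> = (\<Sum>i=1..d. edge_count D' i j) + u j"
    using t by (simp add: sum.distrib)
  finally have sum_eq: "(\<Sum>i=1..d. edge_count D i j) = (\<Sum>i=1..d. edge_count D' i j) + u j" .
  have "type_count D j = r j + (\<Sum>i=1..d. edge_count D i j)" using bal j by (simp add: balanced_def)
  moreover have "type_count D j = type_count D' j + (if t = j then 1 else 0)"
    by (simp add: D type_count_add_mset)
  moreover have "D - {#(t, u)#} = D'" by (simp add: D)
  ultimately show "type_count (D - {#(t, u)#}) j = roots_after_pop r t u j + (\<Sum>i=1..d. edge_count (D - {#(t, u)#}) i j)"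
    using sum_eq \<open>r t \<ge> 1\<close> by (cases "j = t") (simp_all add: roots_after_pop_def)
qed

lemma card_forests_with_eq_sum:
  assumes valid: "valid_signatures d D" and t: "t \<in> {1..d}" and "r t \<ge> 1"
    and finite: "\<And>u. (t, u) \<in># D \<Longrightarrow> finite (forests_with d (roots_after_pop r t u) (D - {#(t, u)#}))"
  shows "finite (forests_with d r D) \<and> card (forests_with d r D)
    = (\<Sum>u\<in>{u. (t, u) \<in># D}. card (forests_with d (roots_after_pop r t u) (D - {#(t, u)#})))"
proof -
  have bij: "bij_betw (pop_root d t) (forests_with d r D)
      (SIGMA u:{u. (t, u) \<in># D}. forests_with d (roots_after_pop r t u) (D - {#(t, u)#}))"
    by (rule bij_betw_pop_root) (use t \<open>r t \<ge> 1\<close> valid in \<open>auto simp: valid_signatures_def\<close>)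
  have "finite (SIGMA u:{u. (t, u) \<in># D}. forests_with d (roots_after_pop r t u) (D - {#(t, u)#}))"
    using finite by (intro finite_SigmaI finite_snd_fst) auto
  moreover have "card (SIGMA u:{u. (t, u) \<in># D}. forests_with d (roots_after_pop r t u) (D - {#(t, u)#}))
      = (\<Sum>u\<in>{u. (t, u) \<in># D}. card (forests_with d (roots_after_pop r t u) (D - {#(t, u)#})))"
    using finite by (intro card_SigmaI finite_snd_fst) auto
  ultimately show ?thesis using bij_betw_finite[OF bij] bij_betw_same_card[OF bij] by simp
qed

lemma det_laplacian_mat_signatures_pop:
  assumes bal: "balanced d r D" and t: "t \<in> {1..d}" and "r t \<ge> 1"
  shows "fact (type_count D t - 2) * (\<Sum>u\<in>{u. (t, u) \<in># D}. int (count D (t, u))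
      * det (laplacian_mat d (type_count (D - {#(t, u)#})) (edge_count (D - {#(t, u)#}))))
    = fact (type_count D t - 1) * det (laplacian_mat d (type_count D) (edge_count D))"
proof -
  define U where "U = {u. (t, u) \<in># D}"
  define n where "n = type_count D"
  define E where "E = edge_count D"
  have fin_U: "finite U" by (simp add: U_def finite_snd_fst)
  have vertices: "(\<Sum>u\<in>U. count D (t, u)) = n t"
    using sum_count_fst_eq[where B=U and t=t and D=D and f="\<lambda>_. 1"] fin_U
    by (simp add: U_def n_def type_count_def)
  have edges: "(\<Sum>u\<in>U. count D (t, u) * u j) = E t j" for j
    using sum_count_fst_eq[where B=U and t=t and D=D and f="\<lambda>u. u j"] fin_U
    by (simp add: U_def E_def edge_count_def)
  have n_t: "n t = r t + (\<Sum>i=1..d. E i t)" using bal t by (simp add: balanced_def n_def E_def)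
  have leaf: "\<forall>i\<in>{1..d}. E i t = 0" if "n t = 1"
  proof -
    have "(\<Sum>i=1..d. E i t) = 0" using n_t that \<open>r t \<ge> 1\<close> by linarith
    then show ?thesis by simp
  qed
  have "n t \<ge> 1" using n_t \<open>r t \<ge> 1\<close> by simp
  have "fact (n t - 2) * (\<Sum>u\<in>U. int (count D (t, u)) * det (laplacian_mat d (n(t := n t - 1)) (E(t := \<lambda>j. E t j - u j))))
      = fact (n t - 1) * det (laplacian_mat d n E)"
    by (rule det_laplacian_mat_recurrence[where c="\<lambda>u. count D (t, u)" and n=n and E=E and U=U and t=t,
          OF t _ vertices edges \<open>n t \<ge> 1\<close> leaf])
      (simp add: U_def E_def le_edge_count)
  moreover have "(\<Sum>u\<in>U. int (count D (t, u)) * det (laplacian_mat d (type_count (D - {#(t, u)#})) (edge_count (D - {#(t, u)#}))))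
      = (\<Sum>u\<in>U. int (count D (t, u)) * det (laplacian_mat d (n(t := n t - 1)) (E(t := \<lambda>j. E t j - u j))))"
    by (intro sum.cong refl) (simp add: U_def n_def E_def type_count_remove edge_count_remove)
  ultimately show ?thesis by (simp add: U_def n_def E_def)
qed

lemma card_forests_with_pop:
  assumes valid: "valid_signatures d D" and bal: "balanced d r D" and t: "t \<in> {1..d}" and "r t \<ge> 1"
    and IH: "\<And>u. (t, u) \<in># D \<Longrightarrow> finite (forests_with d (roots_after_pop r t u) (D - {#(t, u)#}))
      \<and> int (card (forests_with d (roots_after_pop r t u) (D - {#(t, u)#})) * mult_fact (D - {#(t, u)#}))
        = (\<Prod>j=1..d. fact (type_count (D - {#(t, u)#}) j - 1))
          * det (laplacian_mat d (type_count (D - {#(t, u)#})) (edge_count (D - {#(t, u)#})))"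
  shows "finite (forests_with d r D) \<and> int (card (forests_with d r D) * mult_fact D)
    = (\<Prod>j=1..d. fact (type_count D j - 1)) * det (laplacian_mat d (type_count D) (edge_count D))"
proof -
  define U where "U = {u. (t, u) \<in># D}"
  define G where "G u = forests_with d (roots_after_pop r t u) (D - {#(t, u)#})" for u
  define M where "M u = laplacian_mat d (type_count (D - {#(t, u)#})) (edge_count (D - {#(t, u)#}))" for u
  define n where "n = type_count D"
  define P where "P = (\<Prod>j\<in>{1..d} - {t}. (fact (n j - 1) :: int))"
  have fin_card: "finite (forests_with d r D) \<and> card (forests_with d r D) = (\<Sum>u\<in>U. card (G u))"
    unfolding U_def G_def by (rule card_forests_with_eq_sum[where r=r, OF valid t \<open>r t \<ge> 1\<close>]) (use IH in blast)
  have counts: "int (card (G u) * mult_fact D) = int (count D (t, u)) * (fact (n t - 2) * P * det (M u))"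
    if "u \<in> U" for u
  proof -
    have "(\<Prod>j\<in>{1..d} - {t}. (fact ((n(t := n t - 1)) j - 1) :: int)) = P"
      unfolding P_def by (rule prod.cong) auto
    then have "(\<Prod>j=1..d. (fact ((n(t := n t - 1)) j - 1) :: int)) = fact (n t - 2) * P"
      using t by (simp add: prod.remove numeral_2_eq_2)
    then show ?thesis
      using IH[of u] that mult_fact_remove[of "(t, u)" D]
      by (simp add: U_def G_def M_def n_def type_count_remove)
  qed
  have "int (card (forests_with d r D) * mult_fact D) = (\<Sum>u\<in>U. int (card (G u) * mult_fact D))"
    using fin_card by (simp add: sum_distrib_right)
  also have "\<dots> = (\<Sum>u\<in>U. P * (fact (n t - 2) * (int (count D (t, u)) * det (M u))))"
    by (intro sum.cong refl) (simp only: counts, simp add: mult_ac)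
  also have "\<dots> = P * (fact (n t - 2) * (\<Sum>u\<in>U. int (count D (t, u)) * det (M u)))"
    by (simp add: sum_distrib_left)
  also have "\<dots> = P * (fact (n t - 1) * det (laplacian_mat d n (edge_count D)))"
    using det_laplacian_mat_signatures_pop[OF bal t \<open>r t \<ge> 1\<close>] by (simp only: U_def M_def n_def)
  also have "\<dots> = (\<Prod>j=1..d. fact (n j - 1)) * det (laplacian_mat d n (edge_count D))"
    using t by (simp add: P_def prod.remove)
  finally show ?thesis using fin_card by (simp add: n_def)
qed

lemma card_forests_with:
  assumes "valid_signatures d D" and "balanced d r D"
  shows "finite (forests_with d r D) \<and> int (card (forests_with d r D) * mult_fact D)
    = (\<Prod>j=1..d. fact (type_count D j - 1)) * det (laplacian_mat d (type_count D) (edge_count D))"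
  using assms
proof (induction "size D" arbitrary: D r rule: less_induct)
  case less
  consider "D = {#}" | "D \<noteq> {#}" "\<forall>j\<in>{1..d}. r j = 0" | t where "t \<in> {1..d}" "r t \<ge> 1"
    by fastforce
  then show ?case
  proof cases
    case 1
    then show ?thesis using card_forests_with_empty less.prems(2) by simp
  next
    case 2
    then show ?thesis using card_forests_with_no_roots less.prems by blast
  next
    case 3
    show ?thesis
    proof (rule card_forests_with_pop[OF less.prems 3])
      fix u assume "(t, u) \<in># D"
      then show "finite (forests_with d (roots_after_pop r t u) (D - {#(t, u)#}))
        \<and> int (card (forests_with d (roots_after_pop r t u) (D - {#(t, u)#})) * mult_fact (D - {#(t, u)#}))
          = (\<Prod>j=1..d. fact (type_count (D - {#(t, u)#}) j - 1))
            * det (laplacian_mat d (type_count (D - {#(t, u)#})) (edge_count (D - {#(t, u)#})))"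
        using less.hyps[OF _ valid_signatures_remove balanced_pop] less.prems 3 by (simp add: size_Diff1_less)
    qed
  qed
qed

section \<open>The counts of the theorem in terms of signatures\<close>

lemma type_count_signatures: "type_count (signatures F) i = num_vertices_of_type F i"
  unfolding type_count_def signatures_def num_vertices_of_type_def
    mset_filter[symmetric] size_mset filter_map length_map
  by (simp add: o_def signature_def)

lemma edge_count_signatures: "edge_count (signatures F) i j = num_edges F i j"
proof -
  have "edge_count (signatures F) i j
      = sum_list (map (\<lambda>x. snd x j) (filter (\<lambda>x. fst x = i) (map signature (vertices F))))"
    by (simp add: edge_count_def signatures_def sum_mset_sum_list flip: mset_filter mset_map)
  also have "\<dots> = num_edges F i j"
    by (simp add: num_edges_def filter_map o_def signature_def indeg_type_def)
  finally show ?thesis .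
qed

lemma count_signatures: "count (signatures F) (i, u) = num_vertices_indeg F i u"
proof -
  have "count (signatures F) (i, u) = length (filter ((=) (i, u)) (map signature (vertices F)))"
    unfolding signatures_def count_mset count_list_eq_length_filter ..
  also have "\<dots> = num_vertices_indeg F i u"
    unfolding num_vertices_indeg_def filter_map length_map o_def signature_def
    by (rule arg_cong[where f=length], rule filter_cong) auto
  finally show ?thesis .
qed

lemma mset_subseteq_concat_subtrees: "mset cs \<subseteq># mset (concat (map subtrees cs))"
proof (induction cs)
  case (Cons c cs)
  obtain t ds where "c = Node t ds" by (cases c)
  then show ?case by simp (rule subset_mset.order_trans[OF Cons.IH mset_subset_eq_add_right])
qed simp

lemma mset_subtrees_subseteq_concat:
  "c \<in> set cs \<Longrightarrow> mset (subtrees c) \<subseteq># mset (concat (map subtrees cs))"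
proof (induction cs)
  case (Cons c' cs)
  then show ?case
    by (cases "c = c'") (auto intro: subset_mset.order_trans[OF _ mset_subset_eq_add_right]
        subset_mset.order_trans[OF _ mset_subset_eq_add_left])
qed simp

lemma mset_children_subseteq_subtrees:
  "v \<in> set (subtrees T) \<Longrightarrow> mset (children v) \<subseteq># mset (subtrees T)"
proof (induction T arbitrary: v)
  case (Node t cs)
  show ?case
  proof (cases "v = Node t cs")
    case True
    then show ?thesis using mset_subseteq_concat_subtrees[of cs]
      by simp (metis add_mset_add_single mset_subset_eq_add_left subset_mset.order_trans)
  next
    case False
    then obtain c where c: "c \<in> set cs" and v: "v \<in> set (subtrees c)" using Node.prems by auto
    have "mset (children v) \<subseteq># mset (subtrees c)" by (rule Node.IH[OF c v])
    also have "\<dots> \<subseteq># mset (concat (map subtrees cs))" by (rule mset_subtrees_subseteq_concat[OF c])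
    also have "\<dots> \<subseteq># mset (subtrees (Node t cs))" by simp
    finally show ?thesis .
  qed
qed

lemma wf_tree_subtrees: "wf_tree d T \<Longrightarrow> v \<in> set (subtrees T) \<Longrightarrow> wf_tree d v"
  by (induction T arbitrary: v) auto

lemma indeg_type_le_num_vertices_of_type:
  assumes "v \<in> set (vertices F)"
  shows "indeg_type v j \<le> num_vertices_of_type F j"
proof -
  obtain T where T: "T \<in> set F" and v: "v \<in> set (subtrees T)" using assms by (auto simp: vertices_def)
  have "mset (children v) \<subseteq># mset (subtrees T)" by (rule mset_children_subseteq_subtrees[OF v])
  also have "\<dots> \<subseteq># mset (vertices F)"
    unfolding vertices_def by (rule mset_subtrees_subseteq_concat[OF T])
  finally have "filter_mset (\<lambda>c. root_type c = j) (mset (children v))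
      \<subseteq># filter_mset (\<lambda>c. root_type c = j) (mset (vertices F))"
    by (rule multiset_filter_mono)
  then have "size (filter_mset (\<lambda>c. root_type c = j) (mset (children v)))
      \<le> size (filter_mset (\<lambda>c. root_type c = j) (mset (vertices F)))"
    by (rule size_mset_mono)
  then show ?thesis
    by (simp add: indeg_type_def num_vertices_of_type_def flip: mset_filter del: mset_filter)
qed

lemma signatures_subset_box:
  assumes wf: "wf_forest d F" and n: "\<forall>j\<in>{1..d}. num_vertices_of_type F j = n j"
  shows "set_mset (signatures F) \<subseteq> {1..d} \<times> indeg_box d n"
proof
  fix x assume "x \<in># signatures F"
  then obtain v where v: "v \<in> set (vertices F)" and x: "x = signature v" by (auto simp: signatures_def)
  obtain T where "T \<in> set F" "v \<in> set (subtrees T)" using v by (auto simp: vertices_def)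
  then have wf_v: "wf_tree d v" using wf by (auto simp: wf_forest_def intro: wf_tree_subtrees)
  obtain t cs where v_Node: "v = Node t cs" by (cases v)
  have "root_type c \<in> {1..d}" if "c \<in> set cs" for c
    using wf_v that by (intro root_type_wf_tree) (simp add: v_Node)
  then have "indeg_type v j = 0" if "j \<notin> {1..d}" for j
    using that by (auto simp: v_Node indeg_type_def filter_empty_conv)
  moreover have "indeg_type v j \<le> n j" if "j \<in> {1..d}" for j
    using indeg_type_le_num_vertices_of_type[OF v, of j] n that by simp
  ultimately show "x \<in> {1..d} \<times> indeg_box d n"
    using root_type_wf_tree[OF wf_v] by (simp add: x signature_def indeg_box_def)
qed

lemma finite_indeg_box: "finite (indeg_box d n)"
proof -
  define m where "m = (\<Sum>j=1..d. n j)"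
  have "u j \<le> m" if "u \<in> indeg_box d n" "j \<in> {1..d}" for u j
    using that member_le_sum[of j "{1..d}" n] by (auto simp: indeg_box_def m_def intro: le_trans)
  then have "indeg_box d n \<subseteq> {u. \<forall>j. (j \<in> {1..d} \<longrightarrow> u j \<in> {0..m}) \<and> (j \<notin> {1..d} \<longrightarrow> u j = 0)}"
    by (auto simp: indeg_box_def)
  moreover have "finite {u. \<forall>j. (j \<in> {1..d} \<longrightarrow> u j \<in> {0..m}) \<and> (j \<notin> {1..d} \<longrightarrow> (u j :: nat) = 0)}"
    by (rule finite_set_of_finite_funs) auto
  ultimately show ?thesis by (rule finite_subset)
qed

definition signature_mset :: "nat \<Rightarrow> (nat \<Rightarrow> nat) \<Rightarrow> (nat \<Rightarrow> (nat \<Rightarrow> nat) \<Rightarrow> nat) \<Rightarrow> (nat \<times> (nat \<Rightarrow> nat)) multiset" where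
  "signature_mset d n N = (\<Sum>x\<in>{1..d} \<times> indeg_box d n. replicate_mset (N (fst x) (snd x)) x)"

lemma count_signature_mset:
  "count (signature_mset d n N) (i, u) = (if i \<in> {1..d} \<and> u \<in> indeg_box d n then N i u else 0)"
  unfolding signature_mset_def count_sum using finite_indeg_box[of d n]
  by (simp add: sum.delta sum.delta')

lemma set_signature_mset: "set_mset (signature_mset d n N) \<subseteq> {1..d} \<times> indeg_box d n"
proof
  fix x assume "x \<in># signature_mset d n N"
  then have "count (signature_mset d n N) x > 0" by simp
  then show "x \<in> {1..d} \<times> indeg_box d n" by (cases x) (simp add: count_signature_mset split: if_splits)
qed

lemma valid_signature_mset: "valid_signatures d (signature_mset d n N)"
  unfolding valid_signatures_def
proof
  fix x assume "x \<in># signature_mset d n N"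
  then have "x \<in> {1..d} \<times> indeg_box d n" using set_signature_mset by blast
  then show "fst x \<in> {1..d} \<and> (\<forall>j. j \<notin> {1..d} \<longrightarrow> snd x j = 0)" by (auto simp: indeg_box_def)
qed

lemma sum_count_signature_mset:
  assumes "i \<in> {1..d}"
  shows "(\<Sum>x\<in>#filter_mset (\<lambda>x. fst x = i) (signature_mset d n N). f (snd x))
    = (\<Sum>u\<in>indeg_box d n. N i u * f u)"
proof -
  have "{u. (i, u) \<in># signature_mset d n N} \<subseteq> indeg_box d n"
    using set_signature_mset by blast
  from sum_count_fst_eq[OF finite_indeg_box this] assms show ?thesis
    by (simp add: count_signature_mset)
qed

lemma type_count_signature_mset:
  "i \<in> {1..d} \<Longrightarrow> type_count (signature_mset d n N) i = (\<Sum>u\<in>indeg_box d n. N i u)"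
  using sum_count_signature_mset[where f="\<lambda>_. 1"] by (simp add: type_count_def)

lemma edge_count_signature_mset:
  "i \<in> {1..d} \<Longrightarrow> edge_count (signature_mset d n N) i j = (\<Sum>u\<in>indeg_box d n. u j * N i u)"
  using sum_count_signature_mset[where f="\<lambda>u. u j"] by (simp add: edge_count_def mult.commute)

lemma mult_fact_signature_mset:
  "mult_fact (signature_mset d n N) = (\<Prod>i=1..d. \<Prod>u\<in>indeg_box d n. fact (N i u))"
proof -
  have "mult_fact (signature_mset d n N) = (\<Prod>x\<in>{1..d} \<times> indeg_box d n. fact (count (signature_mset d n N) x))"
    unfolding mult_fact_def using set_signature_mset finite_indeg_box
    by (intro prod.mono_neutral_left) (auto simp: not_in_iff)
  also have "\<dots> = (\<Prod>(i, u)\<in>{1..d} \<times> indeg_box d n. fact (N i u))"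
    by (rule prod.cong) (auto simp: count_signature_mset)
  also have "\<dots> = (\<Prod>i=1..d. \<Prod>u\<in>indeg_box d n. fact (N i u))"
    by (simp add: prod.cartesian_product)
  finally show ?thesis .
qed

lemma forest_class_eq_forests_with:
  assumes n: "\<forall>i\<in>{1..d}. type_count (signature_mset d n N) i = n i"
    and k: "\<forall>i\<in>{1..d}. \<forall>j\<in>{1..d}. i \<noteq> j \<longrightarrow> int (edge_count (signature_mset d n N) i j) = k i j"
  shows "forest_class d n r k N = forests_with d r (signature_mset d n N)"
proof (rule Set.set_eqI, rule iffI)
  fix F assume F: "F \<in> forest_class d n r k N"
  then have wf: "wf_forest d F" and vertices: "\<forall>i\<in>{1..d}. num_vertices_of_type F i = n i"
    by (auto simp: forest_class_def)
  have "count (signatures F) x = count (signature_mset d n N) x" for x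
  proof (cases "x \<in> {1..d} \<times> indeg_box d n")
    case True
    then show ?thesis using F by (auto simp: forest_class_def count_signatures count_signature_mset)
  next
    case False
    then have "x \<notin># signatures F" using signatures_subset_box[OF wf vertices] by blast
    then show ?thesis using False by (cases x) (auto simp: count_signature_mset not_in_iff)
  qed
  then show "F \<in> forests_with d r (signature_mset d n N)"
    using F by (auto simp: forest_class_def forests_with_def num_roots_of_type_def of_type_def multiset_eqI)
next
  fix F assume "F \<in> forests_with d r (signature_mset d n N)"
  then show "F \<in> forest_class d n r k N"
    using n k by (auto simp: forest_class_def forests_with_def num_roots_of_type_def of_type_def
        count_signature_mset
        simp flip: type_count_signatures edge_count_signatures count_signatures)
qed

lemma balanced_signature_mset:
  assumes roots: "\<forall>j\<in>{1..d}. - k j j = int (r j) + (\<Sum>i\<in>{1..d} - {j}. k i j)"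
    and n: "\<forall>i\<in>{1..d}. type_count D i = n i"
    and k': "\<forall>i\<in>{1..d}. \<forall>j\<in>{1..d}. int (edge_count D i j) = kprime n k i j"
  shows "balanced d r D"
  unfolding balanced_def
proof
  fix j assume j: "j \<in> {1..d}"
  have "int (\<Sum>i=1..d. edge_count D i j) = (\<Sum>i=1..d. kprime n k i j)"
    using k' j by simp
  also have "\<dots> = kprime n k j j + (\<Sum>i\<in>{1..d} - {j}. kprime n k i j)"
    using j by (simp add: sum.remove)
  also have "(\<Sum>i\<in>{1..d} - {j}. kprime n k i j) = (\<Sum>i\<in>{1..d} - {j}. k i j)"
    by (rule sum.cong) (auto simp: kprime_def)
  also have "kprime n k j j + (\<Sum>i\<in>{1..d} - {j}. k i j) = int (n j) - int (r j)"
  proof -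
    have "- k j j = int (r j) + (\<Sum>i\<in>{1..d} - {j}. k i j)" using roots j by blast
    then show ?thesis by (simp add: kprime_def)
  qed
  finally have "int (\<Sum>i=1..d. edge_count D i j) = int (n j) - int (r j)" .
  moreover have "type_count D j = n j" using n j by blast
  ultimately show "type_count D j = r j + (\<Sum>i=1..d. edge_count D i j)" by linarith
qed

lemma laplacian_mat_eq_neg_k:
  assumes n: "\<forall>i\<in>{1..d}. type_count D i = n i" and pos: "\<forall>i\<in>{1..d}. n i > 0"
    and k': "\<forall>i\<in>{1..d}. \<forall>j\<in>{1..d}. int (edge_count D i j) = kprime n k i j"
  shows "laplacian_mat d (type_count D) (edge_count D) = mat d d (\<lambda>(i, j). - k (i + 1) (j + 1))"
proof (rule eq_matI)
  fix i j assume "i < dim_row (mat d d (\<lambda>(i, j). - k (i + 1) (j + 1)))"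
    and "j < dim_col (mat d d (\<lambda>(i, j). - k (i + 1) (j + 1)))"
  then have i: "Suc i \<in> {1..d}" and j: "Suc j \<in> {1..d}" by auto
  then show "laplacian_mat d (type_count D) (edge_count D) $$ (i, j) = mat d d (\<lambda>(i, j). - k (i + 1) (j + 1)) $$ (i, j)"
    using n pos k' by (auto simp: kprime_def)
qed auto

lemma card_forest_class_mult_fact:
  assumes roots: "\<forall>j\<in>{1..d}. - k j j = int (r j) + (\<Sum>i\<in>{1..d} - {j}. k i j)"
    and pos: "\<forall>i\<in>{1..d}. n i > 0"
    and vertices: "\<forall>i\<in>{1..d}. n i = (\<Sum>u\<in>indeg_box d n. N i u)"
    and edges: "\<forall>i\<in>{1..d}. \<forall>j\<in>{1..d}. kprime n k i j = (\<Sum>u\<in>indeg_box d n. int (u j * N i u))"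
  shows "int (card (forest_class d n r k N) * mult_fact (signature_mset d n N))
    = (\<Prod>j=1..d. fact (n j - 1)) * det (mat d d (\<lambda>(i, j). - k (i + 1) (j + 1)))"
proof -
  define D where "D = signature_mset d n N"
  have n: "\<forall>i\<in>{1..d}. type_count D i = n i"
    using vertices by (simp add: D_def type_count_signature_mset)
  have k': "\<forall>i\<in>{1..d}. \<forall>j\<in>{1..d}. int (edge_count D i j) = kprime n k i j"
    using edges by (simp add: D_def edge_count_signature_mset)
  have "forest_class d n r k N = forests_with d r D"
    unfolding D_def by (rule forest_class_eq_forests_with) (use n k' in \<open>auto simp: D_def kprime_def\<close>)
  moreover have "(\<Prod>j=1..d. (fact (type_count D j - 1) :: int)) = (\<Prod>j=1..d. fact (n j - 1))"
    using n by (intro prod.cong) auto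
  ultimately show ?thesis
    using card_forests_with[OF valid_signature_mset[of d n N, folded D_def]
        balanced_signature_mset[OF roots n k'], THEN conjunct2]
    by (simp only: D_def [symmetric] laplacian_mat_eq_neg_k[OF n pos k'])
qed

theorem proposition5p7:
  fixes d :: nat and r n :: "nat \<Rightarrow> nat" and k :: "nat \<Rightarrow> nat \<Rightarrow> int"
    and N :: "nat \<Rightarrow> (nat \<Rightarrow> nat) \<Rightarrow> nat"
  assumes "d \<ge> 2"
    and "(\<Sum>i=1..d. r i) \<ge> 1"
    and "\<forall>i\<in>{1..d}. \<forall>j\<in>{1..d}. i \<noteq> j \<longrightarrow> k i j \<ge> 0"
    and "\<forall>j\<in>{1..d}. - k j j = int (r j) + (\<Sum>i\<in>{1..d} - {j}. k i j)"
    and "\<forall>i\<in>{1..d}. int (n i) \<ge> - k i i"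
    and "\<forall>i\<in>{1..d}. - k i i > 0"
    and "\<forall>i\<in>{1..d}. n i = (\<Sum>u\<in>indeg_box d n. N i u)"
    and "\<forall>i\<in>{1..d}. \<forall>j\<in>{1..d}. kprime n k i j = (\<Sum>u\<in>indeg_box d n. int (u j * N i u))"
  shows "real (card (forest_class d n r k N)) =
    (\<Prod>j=1..d. fact (n j - 1)) * real_of_int (det (mat d d (\<lambda>(i, j). - k (i + 1) (j + 1))))
    / (\<Prod>i=1..d. \<Prod>u\<in>indeg_box d n. fact (N i u))"
proof -
  have "\<forall>i\<in>{1..d}. n i > 0" using assms(5,6) by force
  then have "real_of_int (int (card (forest_class d n r k N) * mult_fact (signature_mset d n N)))
      = real_of_int ((\<Prod>j=1..d. fact (n j - 1)) * det (mat d d (\<lambda>(i, j). - k (i + 1) (j + 1))))"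
    using card_forest_class_mult_fact[OF assms(4) _ assms(7,8)] by simp
  then have "real (card (forest_class d n r k N)) * (\<Prod>i=1..d. \<Prod>u\<in>indeg_box d n. fact (N i u))
      = (\<Prod>j=1..d. fact (n j - 1)) * real_of_int (det (mat d d (\<lambda>(i, j). - k (i + 1) (j + 1))))"
    by (simp add: of_int_prod mult_fact_signature_mset)
  moreover have "(\<Prod>i=1..d. \<Prod>u\<in>indeg_box d n. fact (N i u) :: real) \<noteq> 0"
    by (simp add: prod_zero_iff finite_indeg_box)
  ultimately show ?thesis by (simp add: nonzero_eq_divide_eq)
qed

end
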